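(* Let $\mu$ be a compactly supported probability measure on $\mathbb{R}^n$ whose support is not included in a hyperplane, and let $K$ be the convex hull of its support. Let $f:\mathbb{R}^n\to\mathbb{R}$ be continuously differentiable and $W$ the convex hull of $\nabla f(K)$. Define $\phi(t)=\inf\{\Lambda^*_\mu(y): f(y)\ge t\}$ for $t\in\mathbb{R}$. Let $t\in\mathbb{R}$, $\delta>0$, and assume $\phi(t-\delta)<\phi(s)$ for all $s>t-\delta$. Then for every $x\in K$, $$f(x)\ge t\ \Longrightarrow\ \sup_{\xi\in W,\ 0\le\theta\le\theta_0}\{\langle\theta\xi,x\rangle-\Lambda_\mu(\theta\xi)-\theta\delta\}\ge\phi(t-\delta),$$ where $\theta_0=\Lambda^*_\mu(x)/\delta$.
   Context: $\Lambda_\mu(\xi)=\log\int e^{\langle\xi,x\rangle}d\mu(x)$ and $\Lambda^*_\mu(y)=\sup_{\xi\in\mathbb{R}^n}\{\langle\xi,y\rangle-\Lambda_\mu(\xi)\}$ its Legendre transform. *)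

theory Defs
  imports "HOL-Probability.Probability"
begin

definition msupport :: "'a::euclidean_space measure \<Rightarrow> 'a set" where
  "msupport \<mu> = {x. \<forall>e>0. emeasure \<mu> (ball x e) > 0}"

definition Lam :: "'a::euclidean_space measure \<Rightarrow> 'a \<Rightarrow> real" where
  "Lam \<mu> \<xi> = ln (\<integral>x. exp (\<xi> \<bullet> x) \<partial>\<mu>)"

definition Lstar :: "'a::euclidean_space measure \<Rightarrow> 'a \<Rightarrow> ereal" where
  "Lstar \<mu> y = (SUP \<xi>. ereal (\<xi> \<bullet> y - Lam \<mu> \<xi>))"

text \<open>phi(t) = inf { Lstar(y) : f(y) >= t } (inf of empty set is +infinity).\<close>
definition phi :: "'a::euclidean_space measure \<Rightarrow> ('a \<Rightarrow> real) \<Rightarrow> real \<Rightarrow> ereal" where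
  "phi \<mu> f t = (INF y\<in>{y. f y \<ge> t}. Lstar \<mu> y)"

end

(*
  Suppose the supremum stayed below some c < phi(t - delta).  The payoff
  theta <xi, x> - Lam(theta xi) - theta delta is concave in the cone point theta xi, and
  separating its hypograph from the epigraph of the convex function Lam yields one point z
  with Lstar(z) <= L and L + theta <xi, x - z> - theta delta <= c for all xi in W and
  0 <= theta <= theta_0; finiteness of Lstar(z) forces z into K.  If f(z) >= t - delta, then
  phi(t - delta) <= Lstar(z) <= c.  Otherwise f crosses the level t - delta at a point w of
  [z, x], and the mean value theorem gives a gradient xi in W whose slope along x - z pays
  for the whole budget theta_0 delta; convexity of Lstar along [z, x] then gives
  Lstar(w) <= c.  Either way phi(t - delta) <= c, a contradiction.
*)
theory Submission
  imports Defs
begin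

lemma AE_in_msupport:
  fixes \<mu> :: "'a::euclidean_space measure"
  assumes sets_\<mu>: "sets \<mu> = sets borel"
  shows "AE y in \<mu>. y \<in> msupport \<mu>"
proof -
  obtain B :: "'a set set" where B: "countable B" "\<And>C. C \<in> B \<Longrightarrow> open C"
    "\<And>S. open S \<Longrightarrow> \<exists>U. U \<subseteq> B \<and> S = \<Union>U"
    by (metis univ_second_countable)
  let ?N = "{b\<in>B. emeasure \<mu> b = 0}"
  have null: "(\<Union>b\<in>?N. b) \<in> null_sets \<mu>"
    using B(1,2) sets_\<mu> by (intro null_sets_UN') (auto intro!: null_setsI)
  have "{y\<in>space \<mu>. y \<notin> msupport \<mu>} \<subseteq> (\<Union>b\<in>?N. b)"
  proof
    fix y assume "y \<in> {y\<in>space \<mu>. y \<notin> msupport \<mu>}"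
    then obtain e where e: "e > 0" "emeasure \<mu> (ball y e) = 0"
      unfolding msupport_def by (auto simp: not_less)
    obtain U where U: "U \<subseteq> B" "ball y e = \<Union>U"
      using B(3)[of "ball y e"] by auto
    then obtain b where b: "b \<in> U" "y \<in> b"
      using e(1) by (metis UnionE centre_in_ball)
    have "ball y e \<in> sets \<mu>" using sets_\<mu> by simp
    moreover have "b \<in> sets \<mu>" using sets_\<mu> U b B(2) by auto
    ultimately have "emeasure \<mu> b \<le> emeasure \<mu> (ball y e)"
      using U b by (intro emeasure_mono) auto
    then show "y \<in> (\<Union>b\<in>?N. b)" using e(2) b U by auto
  qed
  then show ?thesis using null by (rule AE_I'[rotated])
qed

lemma Lam_zero: "prob_space \<mu> \<Longrightarrow> Lam \<mu> 0 = 0"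
  by (simp add: Lam_def prob_space.prob_space)

lemma Lstar_le_iff: "Lstar \<mu> y \<le> ereal L \<longleftrightarrow> (\<forall>\<eta>. \<eta> \<bullet> y - Lam \<mu> \<eta> \<le> L)"
  unfolding Lstar_def by (simp add: SUP_le_iff)

lemma Lstar_nonneg: "prob_space \<mu> \<Longrightarrow> Lstar \<mu> y \<ge> 0"
  unfolding Lstar_def by (rule SUP_upper2[of 0]) (simp_all add: Lam_zero zero_ereal_def)

lemma Lstar_convex_combination:
  assumes "Lstar \<mu> z \<le> ereal Lz" "Lstar \<mu> x \<le> ereal Lx" "0 \<le> u" "u \<le> 1"
  shows "Lstar \<mu> ((1 - u) *\<^sub>R z + u *\<^sub>R x) \<le> ereal ((1 - u) * Lz + u * Lx)"
  unfolding Lstar_le_iff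
proof
  fix \<eta>
  have "\<eta> \<bullet> z - Lam \<mu> \<eta> \<le> Lz" "\<eta> \<bullet> x - Lam \<mu> \<eta> \<le> Lx"
    using assms(1,2) unfolding Lstar_le_iff by auto
  then have "(1 - u) * (\<eta> \<bullet> z - Lam \<mu> \<eta>) + u * (\<eta> \<bullet> x - Lam \<mu> \<eta>) \<le> (1 - u) * Lz + u * Lx"
    using assms(3,4) by (intro add_mono mult_left_mono) auto
  then show "\<eta> \<bullet> ((1 - u) *\<^sub>R z + u *\<^sub>R x) - Lam \<mu> \<eta> \<le> (1 - u) * Lz + u * Lx"
    by (simp add: inner_add_right algebra_simps)
qed

lemma phi_le_Lstar: "t \<le> f w \<Longrightarrow> phi \<mu> f t \<le> Lstar \<mu> w"
  unfolding phi_def by (rule INF_lower) simp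

lemma convex_scaled_cone:
  fixes W :: "'a::real_vector set" and \<Theta> :: "real set"
  assumes W: "convex W" and \<Theta>: "convex \<Theta>" "\<Theta> \<subseteq> {0..}"
  shows "convex {(\<theta> *\<^sub>R \<xi>, \<theta>) | \<xi> \<theta>. \<xi> \<in> W \<and> \<theta> \<in> \<Theta>}"
proof (rule convexI, clarify)
  fix \<xi>1 \<theta>1 \<xi>2 \<theta>2 and u v :: real
  assume in_W: "\<xi>1 \<in> W" "\<xi>2 \<in> W" and in_\<Theta>: "\<theta>1 \<in> \<Theta>" "\<theta>2 \<in> \<Theta>"
    and uv: "0 \<le> u" "0 \<le> v" "u + v = 1"
  define \<theta> where "\<theta> = u * \<theta>1 + v * \<theta>2"
  have "\<theta> \<in> \<Theta>" unfolding \<theta>_def using convexD[OF \<Theta>(1) in_\<Theta> uv] by simp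
  have nonneg: "0 \<le> u * \<theta>1" "0 \<le> v * \<theta>2" using in_\<Theta> \<Theta>(2) uv by auto
  have comb: "u *\<^sub>R (\<theta>1 *\<^sub>R \<xi>1, \<theta>1) + v *\<^sub>R (\<theta>2 *\<^sub>R \<xi>2, \<theta>2)
      = ((u * \<theta>1) *\<^sub>R \<xi>1 + (v * \<theta>2) *\<^sub>R \<xi>2, \<theta>)"
    by (simp add: \<theta>_def)
  show "\<exists>\<xi> \<theta>'. u *\<^sub>R (\<theta>1 *\<^sub>R \<xi>1, \<theta>1) + v *\<^sub>R (\<theta>2 *\<^sub>R \<xi>2, \<theta>2) = (\<theta>' *\<^sub>R \<xi>, \<theta>')
      \<and> \<xi> \<in> W \<and> \<theta>' \<in> \<Theta>"
  proof (cases "\<theta> = 0")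
    case True
    then have "u * \<theta>1 = 0" "v * \<theta>2 = 0" using nonneg unfolding \<theta>_def by linarith+
    then show ?thesis unfolding comb using True in_W \<open>\<theta> \<in> \<Theta>\<close> by auto
  next
    case False
    then have "\<theta> > 0" using nonneg unfolding \<theta>_def by linarith
    define \<xi> where "\<xi> = (u * \<theta>1 / \<theta>) *\<^sub>R \<xi>1 + (v * \<theta>2 / \<theta>) *\<^sub>R \<xi>2"
    have "\<xi> \<in> W" unfolding \<xi>_def
      using \<open>\<theta> > 0\<close> nonneg by (intro convexD[OF W in_W]) (auto simp: \<theta>_def add_divide_distrib[symmetric])
    moreover have "\<theta> *\<^sub>R \<xi> = (u * \<theta>1) *\<^sub>R \<xi>1 + (v * \<theta>2) *\<^sub>R \<xi>2"
      unfolding \<xi>_def using \<open>\<theta> > 0\<close> by (simp add: scaleR_add_right)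
    ultimately show ?thesis unfolding comb using \<open>\<theta> \<in> \<Theta>\<close> by metis
  qed
qed

lemma convex_nonneg_ereal_le: "convex {\<theta>::real. 0 \<le> \<theta> \<and> ereal \<theta> \<le> T}"
  unfolding is_interval_convex_1[symmetric] is_interval_1
  by (auto intro: order_trans[OF ereal_less_eq(3)[THEN iffD2]])

text \<open>The separating hyperplane cannot be vertical because \<open>\<Lambda>\<close> is finite everywhere;
  its slope becomes the point \<open>z\<close>.\<close>
lemma separation_from_epigraph:
  fixes \<Lambda> :: "'a::euclidean_space \<Rightarrow> real" and Q :: "('a \<times> real) set"
  assumes "convex_on UNIV \<Lambda>" "convex Q" "Q \<noteq> {}" and disj: "Q \<inter> epigraph UNIV \<Lambda> = {}"
  shows "\<exists>z L. (\<forall>\<eta>. \<eta> \<bullet> z - \<Lambda> \<eta> \<le> L) \<and> (\<forall>(\<eta>, r)\<in>Q. r + L \<le> \<eta> \<bullet> z)"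
proof -
  obtain a1 a0 b where a: "(a1, a0) \<noteq> 0" and Q_le: "\<forall>(\<eta>, r)\<in>Q. a1 \<bullet> \<eta> + a0 * r \<le> b"
    and epi_ge: "\<And>\<eta> r. \<Lambda> \<eta> \<le> r \<Longrightarrow> b \<le> a1 \<bullet> \<eta> + a0 * r"
    using separating_hyperplane_sets[OF assms(2) convex_epigraphI[OF assms(1)] assms(3) _ disj]
    by (fastforce simp: epigraph_def)
  have "a0 \<ge> 0"
  proof (rule ccontr)
    assume neg: "\<not> a0 \<ge> 0"
    define r where "r = \<Lambda> 0 + (\<bar>b\<bar> + \<bar>a0 * \<Lambda> 0\<bar> + 1) / - a0"
    have "\<Lambda> 0 \<le> r" using neg unfolding r_def by (intro add_increasing2 divide_nonneg_pos) auto
    then have "b \<le> a0 * r" using epi_ge[of 0 r] by simp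
    moreover have "a0 * r = a0 * \<Lambda> 0 - (\<bar>b\<bar> + \<bar>a0 * \<Lambda> 0\<bar> + 1)"
      using neg by (simp add: r_def right_diff_distrib)
    ultimately show False by (simp add: abs_if split: if_splits)
  qed
  moreover have "a0 \<noteq> 0"
  proof
    assume "a0 = 0"
    then have "a1 \<bullet> a1 > 0" using a by (simp add: zero_prod_def)
    define \<eta> where "\<eta> = - ((\<bar>b\<bar> + 1) / (a1 \<bullet> a1)) *\<^sub>R a1"
    have "b \<le> a1 \<bullet> \<eta>" using epi_ge[of \<eta> "\<Lambda> \<eta>"] \<open>a0 = 0\<close> by simp
    moreover have "a1 \<bullet> \<eta> = - (\<bar>b\<bar> + 1)" using \<open>a1 \<bullet> a1 > 0\<close> by (simp add: \<eta>_def)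
    ultimately show False by (simp add: abs_if split: if_splits)
  qed
  ultimately have a0: "a0 > 0" by simp
  show ?thesis
  proof (intro exI conjI allI ballI; clarify?)
    fix \<eta>
    have "b \<le> a1 \<bullet> \<eta> + a0 * \<Lambda> \<eta>" by (rule epi_ge) simp
    then have "b / a0 \<le> (a1 \<bullet> \<eta> + a0 * \<Lambda> \<eta>) / a0" using a0 by (simp add: divide_right_mono)
    then show "\<eta> \<bullet> (- (1 / a0) *\<^sub>R a1) - \<Lambda> \<eta> \<le> - b / a0"
      using a0 by (simp add: add_divide_distrib inner_commute)
  next
    fix \<eta> r assume "(\<eta>, r) \<in> Q"
    then have "a1 \<bullet> \<eta> + a0 * r \<le> b" using Q_le by auto
    then have "(a1 \<bullet> \<eta> + a0 * r) / a0 \<le> b / a0" using a0 by (simp add: divide_right_mono)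
    then show "r + - b / a0 \<le> \<eta> \<bullet> (- (1 / a0) *\<^sub>R a1)"
      using a0 by (simp add: add_divide_distrib inner_commute)
  qed
qed

lemma gradient_level_crossing:
  fixes f :: "'a::real_inner \<Rightarrow> real"
  assumes grad: "\<And>y. GDERIV f y :> g y" and "f z < s" "s < f x"
  shows "\<exists>l\<in>{0<..<1}. \<exists>p\<in>closed_segment z x.
    f ((1 - l) *\<^sub>R z + l *\<^sub>R x) = s \<and> (1 - l) * (g p \<bullet> (x - z)) = f x - s"
proof -
  define h where "h = (\<lambda>\<sigma>. f (z + \<sigma> *\<^sub>R (x - z)))"
  have h_deriv: "(h has_derivative (\<lambda>d. (d *\<^sub>R (x - z)) \<bullet> g (z + \<sigma> *\<^sub>R (x - z)))) (at \<sigma> within X)"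
    for \<sigma> X
  proof -
    have "((\<lambda>\<sigma>. z + \<sigma> *\<^sub>R (x - z)) has_derivative (\<lambda>d. d *\<^sub>R (x - z))) (at \<sigma> within X)"
      by (auto intro!: derivative_eq_intros)
    then show ?thesis
      using has_derivative_compose grad[unfolded gderiv_def] unfolding h_def by blast
  qed
  have "continuous_on {0..1} h"
    using h_deriv has_derivative_continuous by (intro continuous_at_imp_continuous_on) blast
  then obtain l where l: "0 \<le> l" "l \<le> 1" "h l = s"
    using IVT'[of h 0 s 1] assms(2,3) by (auto simp: h_def)
  have "l \<noteq> 0" "l \<noteq> 1" using l(3) assms(2,3) by (auto simp: h_def)
  with l have "l < 1" "0 < l" by auto
  then obtain \<sigma> where \<sigma>: "\<sigma> \<in> {l<..<1}"
      "h 1 - h l = ((1 - l) *\<^sub>R (x - z)) \<bullet> g (z + \<sigma> *\<^sub>R (x - z))"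
    using mvt_simple[OF \<open>l < 1\<close> h_deriv] by blast
  have "z + \<sigma> *\<^sub>R (x - z) \<in> closed_segment z x"
    using \<sigma>(1) \<open>0 < l\<close> unfolding closed_segment_def
    by (intro CollectI exI[of _ \<sigma>]) (auto simp: algebra_simps)
  moreover have "f ((1 - l) *\<^sub>R z + l *\<^sub>R x) = s" using l(3) by (simp add: h_def algebra_simps)
  moreover have "(1 - l) * (g (z + \<sigma> *\<^sub>R (x - z)) \<bullet> (x - z)) = f x - s"
    using \<sigma>(2) l(3) by (simp add: h_def inner_commute)
  ultimately show ?thesis using \<open>0 < l\<close> \<open>l < 1\<close> by auto
qed

lemma Lstar_le_at_level_crossing:
  fixes \<mu> :: "'a::euclidean_space measure"
  assumes "prob_space \<mu>" and "\<delta> > 0" and z: "Lstar \<mu> z \<le> ereal L" and "0 \<le> c"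
    and l: "0 < l" "l < 1" and slope: "\<delta> \<le> (1 - l) * k"
    and cert: "\<And>\<theta>. 0 \<le> \<theta> \<Longrightarrow> ereal \<theta> \<le> Lstar \<mu> x / ereal \<delta> \<Longrightarrow> L + \<theta> * (k - \<delta>) \<le> c"
  shows "Lstar \<mu> ((1 - l) *\<^sub>R z + l *\<^sub>R x) \<le> ereal c"
proof -
  have slope_ge: "\<delta> * l \<le> (1 - l) * (k - \<delta>)" using slope by (simp add: algebra_simps)
  moreover have "0 < \<delta> * l" using \<open>\<delta> > 0\<close> l(1) by simp
  ultimately have "0 < (1 - l) * (k - \<delta>)" by linarith
  then have "k > \<delta>" using l(2) by (simp add: zero_less_mult_iff)
  have "Lstar \<mu> x \<noteq> \<infinity>"
  proof
    assume "Lstar \<mu> x = \<infinity>"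
    then have "L + \<theta> * (k - \<delta>) \<le> c" if "0 \<le> \<theta>" for \<theta>
      using cert[OF that] \<open>\<delta> > 0\<close> by simp
    from this[of "(\<bar>c - L\<bar> + 1) / (k - \<delta>)"] show False using \<open>k > \<delta>\<close> by simp
  qed
  then obtain Lx where Lx: "Lstar \<mu> x = ereal Lx" "0 \<le> Lx"
    using Lstar_nonneg[OF \<open>prob_space \<mu>\<close>, of x] by (cases "Lstar \<mu> x") auto
  define \<theta> where "\<theta> = Lx / \<delta>"
  have "0 \<le> \<theta>" using Lx(2) \<open>\<delta> > 0\<close> by (simp add: \<theta>_def)
  have "L + \<theta> * (k - \<delta>) \<le> c" using cert[OF \<open>0 \<le> \<theta>\<close>] Lx(1) \<open>\<delta> > 0\<close> by (simp add: \<theta>_def)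
  have "(1 - l) * L + l * Lx = (1 - l) * L + \<theta> * (\<delta> * l)" using \<open>\<delta> > 0\<close> by (simp add: \<theta>_def)
  also have "\<dots> \<le> (1 - l) * (L + \<theta> * (k - \<delta>))"
    using mult_left_mono[OF slope_ge \<open>0 \<le> \<theta>\<close>] by (simp add: algebra_simps)
  also have "\<dots> \<le> (1 - l) * c"
    using \<open>L + \<theta> * (k - \<delta>) \<le> c\<close> l(2) by (intro mult_left_mono) auto
  also have "\<dots> \<le> c" using l \<open>0 \<le> c\<close> by (intro mult_left_le_one_le) auto
  finally have "(1 - l) * L + l * Lx \<le> c" .
  have "Lstar \<mu> ((1 - l) *\<^sub>R z + l *\<^sub>R x) \<le> ereal ((1 - l) * L + l * Lx)"
    using z Lx(1) l by (intro Lstar_convex_combination) auto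
  also have "\<dots> \<le> ereal c" using \<open>(1 - l) * L + l * Lx \<le> c\<close> by simp
  finally show ?thesis .
qed

lemma phi_le_of_certificate:
  fixes \<mu> :: "'a::euclidean_space measure"
  assumes "prob_space \<mu>" and grad: "\<And>y. GDERIV f y :> g y" and "\<delta> > 0" and "t \<le> f x"
    and z: "Lstar \<mu> z \<le> ereal L" and "0 \<le> c"
    and cert: "\<And>p \<theta>. p \<in> closed_segment z x \<Longrightarrow> 0 \<le> \<theta> \<Longrightarrow> ereal \<theta> \<le> Lstar \<mu> x / ereal \<delta> \<Longrightarrow>
      L + \<theta> * (g p \<bullet> (x - z)) - \<theta> * \<delta> \<le> c"
  shows "phi \<mu> f (t - \<delta>) \<le> ereal c"
proof (cases "t - \<delta> \<le> f z")
  case True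
  have "ereal 0 \<le> Lstar \<mu> x / ereal \<delta>"
    using Lstar_nonneg[OF \<open>prob_space \<mu>\<close>, of x] \<open>\<delta> > 0\<close> by (cases "Lstar \<mu> x") auto
  then have "L \<le> c" using cert[of z 0] by simp
  have "phi \<mu> f (t - \<delta>) \<le> Lstar \<mu> z" using True by (rule phi_le_Lstar)
  also have "\<dots> \<le> ereal c" using z \<open>L \<le> c\<close> by (simp add: order_trans)
  finally show ?thesis .
next
  case False
  then obtain l p where l: "0 < l" "l < 1" and p: "p \<in> closed_segment z x"
    and w: "f ((1 - l) *\<^sub>R z + l *\<^sub>R x) = t - \<delta>"
    and slope: "(1 - l) * (g p \<bullet> (x - z)) = f x - (t - \<delta>)"
    using gradient_level_crossing[OF grad, of z "t - \<delta>" x] \<open>\<delta> > 0\<close> \<open>t \<le> f x\<close> by auto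
  have "phi \<mu> f (t - \<delta>) \<le> Lstar \<mu> ((1 - l) *\<^sub>R z + l *\<^sub>R x)"
    using w by (intro phi_le_Lstar) simp
  also have "\<dots> \<le> ereal c"
    using slope \<open>t \<le> f x\<close> cert[OF p]
    by (intro Lstar_le_at_level_crossing[OF \<open>prob_space \<mu>\<close> \<open>\<delta> > 0\<close> z \<open>0 \<le> c\<close> l,
          where k = "g p \<bullet> (x - z)"])
      (auto simp: algebra_simps)
  finally show ?thesis .
qed

locale compact_prob_space = prob_space \<mu> for \<mu> :: "'a::euclidean_space measure" +
  assumes sets_eq_borel: "sets \<mu> = sets borel"
    and compact_msupport: "compact (msupport \<mu>)"
begin

lemma msupport_nonempty: "msupport \<mu> \<noteq> {}"
  using AE_in_msupport[OF sets_eq_borel] AE_False by auto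

lemma integrable_exp_inner: "integrable \<mu> (\<lambda>y. exp (\<eta> \<bullet> y))"
proof -
  obtain R where R: "\<And>y. y \<in> msupport \<mu> \<Longrightarrow> norm y \<le> R"
    using compact_imp_bounded[OF compact_msupport] bounded_iff by metis
  have "AE y in \<mu>. norm (exp (\<eta> \<bullet> y)) \<le> exp (norm \<eta> * R)"
    using AE_in_msupport[OF sets_eq_borel]
  proof eventually_elim
    case (elim y)
    have "\<eta> \<bullet> y \<le> norm \<eta> * norm y" by (metis Cauchy_Schwarz_ineq2 abs_le_D1)
    also have "\<dots> \<le> norm \<eta> * R" using R[OF elim] by (simp add: mult_left_mono)
    finally show ?case by simp
  qed
  moreover have "(\<lambda>y. exp (\<eta> \<bullet> y)) \<in> borel_measurable \<mu>"
    unfolding measurable_cong_sets[OF sets_eq_borel refl]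
    by (intro borel_measurable_continuous_onI continuous_intros)
  ultimately show ?thesis
    by (intro Bochner_Integration.integrable_bound[OF integrable_const[of "exp (norm \<eta> * R)"]]) auto
qed

lemma integral_exp_inner_pos: "(\<integral>y. exp (\<eta> \<bullet> y) \<partial>\<mu>) > 0"
proof -
  have "(\<integral>y. exp (\<eta> \<bullet> y) \<partial>\<mu>) \<noteq> 0"
    using integral_nonneg_eq_0_iff_AE[OF integrable_exp_inner] AE_False by auto
  then show ?thesis by (simp add: order_le_neq_trans)
qed

text \<open>Hoelder's inequality in the form of pointwise convexity of \<open>exp\<close>, after normalising
  both exponential moments to 1.\<close>
lemma convex_on_Lam: "convex_on UNIV (Lam \<mu>)"
proof (rule convex_onI)
  fix u :: real and a b :: 'a
  assume u: "0 < u" "u < 1"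
  define A where "A = (\<integral>y. exp (a \<bullet> y) \<partial>\<mu>)"
  define B where "B = (\<integral>y. exp (b \<bullet> y) \<partial>\<mu>)"
  define C where "C = exp ((1 - u) * ln A + u * ln B)"
  have A: "A > 0" and B: "B > 0" and C: "C > 0"
    unfolding A_def B_def C_def by (simp_all add: integral_exp_inner_pos)
  have pointwise: "exp (((1 - u) *\<^sub>R a + u *\<^sub>R b) \<bullet> y)
      \<le> C * ((1 - u) * (exp (a \<bullet> y) / A) + u * (exp (b \<bullet> y) / B))" for y
  proof -
    define p where "p = a \<bullet> y - ln A"
    define q where "q = b \<bullet> y - ln B"
    have "exp (((1 - u) *\<^sub>R a + u *\<^sub>R b) \<bullet> y) / C = exp ((1 - u) *\<^sub>R p + u *\<^sub>R q)"
      unfolding C_def p_def q_def by (simp add: inner_add_left algebra_simps exp_diff exp_add)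
    also have "\<dots> \<le> (1 - u) * exp p + u * exp q"
      using convex_onD[OF exp_convex, of u p q] u by simp
    also have "\<dots> = (1 - u) * (exp (a \<bullet> y) / A) + u * (exp (b \<bullet> y) / B)"
      unfolding p_def q_def using A B by (simp add: exp_diff)
    finally show ?thesis using C by (simp add: divide_le_eq mult.commute)
  qed
  have "(\<integral>y. exp (((1 - u) *\<^sub>R a + u *\<^sub>R b) \<bullet> y) \<partial>\<mu>)
      \<le> (\<integral>y. C * ((1 - u) * (exp (a \<bullet> y) / A) + u * (exp (b \<bullet> y) / B)) \<partial>\<mu>)"
    using pointwise integrable_exp_inner[of a] integrable_exp_inner[of b]
    by (intro integral_mono integrable_exp_inner) auto
  also have "\<dots> = C * ((1 - u) * (A / A) + u * (B / B))"
    using integrable_exp_inner unfolding A_def B_def by simp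
  also have "\<dots> = C" using A B by simp
  finally have "Lam \<mu> ((1 - u) *\<^sub>R a + u *\<^sub>R b) \<le> ln C"
    unfolding Lam_def using integral_exp_inner_pos[of "(1 - u) *\<^sub>R a + u *\<^sub>R b"] by simp
  also have "ln C = (1 - u) * Lam \<mu> a + u * Lam \<mu> b"
    unfolding C_def Lam_def A_def B_def by simp
  finally show "Lam \<mu> ((1 - u) *\<^sub>R a + u *\<^sub>R b) \<le> (1 - u) * Lam \<mu> a + u * Lam \<mu> b" .
qed simp

lemma Lstar_finite_imp_mem_convex_hull:
  assumes "Lstar \<mu> z \<le> ereal L"
  shows "z \<in> convex hull (msupport \<mu>)"
proof (rule ccontr)
  assume "z \<notin> convex hull (msupport \<mu>)"
  then obtain a b where ab: "a \<bullet> z < b" "\<forall>y\<in>convex hull (msupport \<mu>). b < a \<bullet> y"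
    using separating_hyperplane_closed_point[OF convex_convex_hull] compact_msupport
    by (metis compact_convex_hull compact_imp_closed)
  have "s * (b - a \<bullet> z) \<le> L" if "s \<ge> 0" for s
  proof -
    have ae: "AE y in \<mu>. exp ((- s *\<^sub>R a) \<bullet> y) \<le> exp (- s * b)"
      using AE_in_msupport[OF sets_eq_borel]
    proof eventually_elim
      case (elim y)
      then have "b < a \<bullet> y" using ab(2) hull_inc[of y] by auto
      then show ?case using \<open>s \<ge> 0\<close> by (simp add: mult_left_mono)
    qed
    have "(\<integral>y. exp ((- s *\<^sub>R a) \<bullet> y) \<partial>\<mu>) \<le> (\<integral>y. exp (- s * b) \<partial>\<mu>)"
      by (rule integral_mono_AE[OF integrable_exp_inner integrable_const ae])
    then have "(\<integral>y. exp ((- s *\<^sub>R a) \<bullet> y) \<partial>\<mu>) \<le> exp (- s * b)" by (simp add: prob_space)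
    then have "Lam \<mu> (- s *\<^sub>R a) \<le> - s * b"
      unfolding Lam_def by (metis integral_exp_inner_pos ln_exp ln_le_cancel_iff exp_gt_zero)
    moreover have "(- s *\<^sub>R a) \<bullet> z - Lam \<mu> (- s *\<^sub>R a) \<le> L"
      using assms unfolding Lstar_le_iff by blast
    ultimately show ?thesis by (simp add: algebra_simps)
  qed
  from this[of "(\<bar>L\<bar> + 1) / (b - a \<bullet> z)"] show False using ab(1) by simp
qed

lemma minimax_certificate:
  assumes W: "convex W" "W \<noteq> {}" and \<Theta>: "convex \<Theta>" "\<Theta> \<subseteq> {0..}" "\<Theta> \<noteq> {}"
    and below: "\<And>\<xi> \<theta>. \<xi> \<in> W \<Longrightarrow> \<theta> \<in> \<Theta> \<Longrightarrow> \<theta> * (\<xi> \<bullet> x) - Lam \<mu> (\<theta> *\<^sub>R \<xi>) - \<theta> * \<delta> < c"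
  shows "\<exists>z L. Lstar \<mu> z \<le> ereal L \<and> (\<forall>\<xi>\<in>W. \<forall>\<theta>\<in>\<Theta>. L + \<theta> * (\<xi> \<bullet> (x - z)) - \<theta> * \<delta> \<le> c)"
proof -
  define C where "C = {(\<theta> *\<^sub>R \<xi>, \<theta>) | \<xi> \<theta>. \<xi> \<in> W \<and> \<theta> \<in> \<Theta>}"
  define Q where "Q = {(\<eta>, r). \<exists>\<theta>. (\<eta>, \<theta>) \<in> C \<and> r \<le> \<eta> \<bullet> x - \<theta> * \<delta> - c}"
  have "convex C" unfolding C_def using W(1) \<Theta>(1,2) by (rule convex_scaled_cone)
  have "convex Q"
  proof (rule convexI, clarsimp simp: Q_def)
    fix \<eta>1 r1 \<theta>1 \<eta>2 r2 \<theta>2 and u v :: real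
    assume in_C: "(\<eta>1, \<theta>1) \<in> C" "(\<eta>2, \<theta>2) \<in> C" and uv: "0 \<le> u" "0 \<le> v" "u + v = 1"
      and r: "r1 \<le> \<eta>1 \<bullet> x - \<theta>1 * \<delta> - c" "r2 \<le> \<eta>2 \<bullet> x - \<theta>2 * \<delta> - c"
    have "u *\<^sub>R (\<eta>1, \<theta>1) + v *\<^sub>R (\<eta>2, \<theta>2) \<in> C" by (rule convexD[OF \<open>convex C\<close> in_C uv])
    moreover have "u * r1 + v * r2 \<le> u * (\<eta>1 \<bullet> x - \<theta>1 * \<delta> - c) + v * (\<eta>2 \<bullet> x - \<theta>2 * \<delta> - c)"
      using r uv by (intro add_mono mult_left_mono) auto
    moreover have "c * u + c * v = c" using uv(3) by (simp flip: distrib_left)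
    ultimately show "\<exists>\<theta>. (u *\<^sub>R \<eta>1 + v *\<^sub>R \<eta>2, \<theta>) \<in> C
        \<and> u * r1 + v * r2 \<le> (u *\<^sub>R \<eta>1 + v *\<^sub>R \<eta>2) \<bullet> x - \<theta> * \<delta> - c"
      by (intro exI[of _ "u * \<theta>1 + v * \<theta>2"]) (simp add: inner_add_left algebra_simps)
  qed
  moreover have "Q \<noteq> {}" using W(2) \<Theta>(3) unfolding Q_def C_def by blast
  moreover have "Q \<inter> epigraph UNIV (Lam \<mu>) = {}"
    using below unfolding Q_def C_def epigraph_def by (fastforce simp: algebra_simps)
  ultimately obtain z L where z: "\<And>\<eta>. \<eta> \<bullet> z - Lam \<mu> \<eta> \<le> L"
    and Q_below: "\<forall>(\<eta>, r)\<in>Q. r + L \<le> \<eta> \<bullet> z"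
    using separation_from_epigraph[OF convex_on_Lam] by blast
  have "L + \<theta> * (\<xi> \<bullet> (x - z)) - \<theta> * \<delta> \<le> c" if "\<xi> \<in> W" "\<theta> \<in> \<Theta>" for \<xi> \<theta>
  proof -
    have "(\<theta> *\<^sub>R \<xi>, \<theta> * (\<xi> \<bullet> x) - \<theta> * \<delta> - c) \<in> Q" using that unfolding Q_def C_def by auto
    then show ?thesis using Q_below by (auto simp: inner_diff_right algebra_simps)
  qed
  with z show ?thesis unfolding Lstar_le_iff by blast
qed

lemma phi_le_SUP_payoff:
  assumes grad: "\<And>y. GDERIV f y :> g y" and "\<delta> > 0"
    and x: "x \<in> convex hull (msupport \<mu>)" "t \<le> f x"
  defines "W \<equiv> convex hull (g ` (convex hull (msupport \<mu>)))"
    and "\<Theta> \<equiv> {\<theta>. 0 \<le> \<theta> \<and> ereal \<theta> \<le> Lstar \<mu> x / ereal \<delta>}"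
  shows "phi \<mu> f (t - \<delta>) \<le> (SUP (\<xi>, \<theta>) \<in> W \<times> \<Theta>. ereal (\<theta> * (\<xi> \<bullet> x) - Lam \<mu> (\<theta> *\<^sub>R \<xi>) - \<theta> * \<delta>))"
    (is "_ \<le> ?sup")
proof (rule ccontr)
  assume "\<not> phi \<mu> f (t - \<delta>) \<le> ?sup"
  then obtain c where c: "?sup < ereal c" "ereal c < phi \<mu> f (t - \<delta>)"
    unfolding not_le using ereal_dense2 by blast
  have below: "\<theta> * (\<xi> \<bullet> x) - Lam \<mu> (\<theta> *\<^sub>R \<xi>) - \<theta> * \<delta> < c" if "\<xi> \<in> W" "\<theta> \<in> \<Theta>" for \<xi> \<theta>
  proof -
    have "ereal (\<theta> * (\<xi> \<bullet> x) - Lam \<mu> (\<theta> *\<^sub>R \<xi>) - \<theta> * \<delta>) \<le> ?sup"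
      using that by (intro SUP_upper2[of "(\<xi>, \<theta>)"]) auto
    then have "ereal (\<theta> * (\<xi> \<bullet> x) - Lam \<mu> (\<theta> *\<^sub>R \<xi>) - \<theta> * \<delta>) < ereal c"
      using c(1) by (rule order.strict_trans1)
    then show ?thesis by simp
  qed
  have "0 \<in> \<Theta>"
    using Lstar_nonneg[OF prob_space_axioms, of x] \<open>\<delta> > 0\<close> unfolding \<Theta>_def by (cases "Lstar \<mu> x") auto
  have "W \<noteq> {}" unfolding W_def by (simp add: msupport_nonempty)
  then obtain \<xi>\<^sub>0 where "\<xi>\<^sub>0 \<in> W" by blast
  from below[OF this \<open>0 \<in> \<Theta>\<close>] have "0 \<le> c" by (simp add: Lam_zero[OF prob_space_axioms])
  have "convex \<Theta>" "\<Theta> \<subseteq> {0..}" unfolding \<Theta>_def by (auto simp: convex_nonneg_ereal_le)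
  then obtain z L where z: "Lstar \<mu> z \<le> ereal L"
    and cert: "\<forall>\<xi>\<in>W. \<forall>\<theta>\<in>\<Theta>. L + \<theta> * (\<xi> \<bullet> (x - z)) - \<theta> * \<delta> \<le> c"
    using minimax_certificate[OF _ _ _ _ _ below] \<open>\<xi>\<^sub>0 \<in> W\<close> \<open>0 \<in> \<Theta>\<close> unfolding W_def by blast
  have "closed_segment z x \<subseteq> convex hull (msupport \<mu>)"
    using Lstar_finite_imp_mem_convex_hull[OF z] x(1) by (intro closed_segment_subset) auto
  then have "g p \<in> W" if "p \<in> closed_segment z x" for p
    using that unfolding W_def by (blast intro: hull_inc)
  then have "phi \<mu> f (t - \<delta>) \<le> ereal c"
    using cert unfolding \<Theta>_def
    by (intro phi_le_of_certificate[OF prob_space_axioms grad \<open>\<delta> > 0\<close> x(2) z \<open>0 \<le> c\<close>]) simp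
  with c(2) show False by simp
qed

end

theorem lemma6p1:
  fixes \<mu> :: "'a::euclidean_space measure" and f :: "'a \<Rightarrow> real" and g :: "'a \<Rightarrow> 'a"
    and t \<delta> :: real
  assumes "prob_space \<mu>" and "sets \<mu> = sets borel"
    and "compact (msupport \<mu>)"
    and "\<not> (\<exists>a b. a \<noteq> 0 \<and> msupport \<mu> \<subseteq> {x. a \<bullet> x = b})"
    and "\<And>x. GDERIV f x :> g x" and "continuous_on UNIV g"
    and "\<delta> > 0"
    and "\<And>s. s > t - \<delta> \<Longrightarrow> phi \<mu> f (t - \<delta>) < phi \<mu> f s"
  shows "\<forall>x \<in> convex hull (msupport \<mu>). f x \<ge> t \<longrightarrow>
    (SUP p \<in> {(\<xi>, \<theta>). \<xi> \<in> convex hull (g ` (convex hull (msupport \<mu>))) \<and> 0 \<le> \<theta>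
                       \<and> ereal \<theta> \<le> Lstar \<mu> x / ereal \<delta>}.
       ereal ((snd p *\<^sub>R fst p) \<bullet> x - Lam \<mu> (snd p *\<^sub>R fst p) - snd p * \<delta>))
    \<ge> phi \<mu> f (t - \<delta>)"
proof (intro ballI impI)
  interpret compact_prob_space \<mu>
    using assms(1-3) by (simp add: compact_prob_space_def compact_prob_space_axioms_def)
  fix x assume x: "x \<in> convex hull (msupport \<mu>)" "t \<le> f x"
  have product: "{(\<xi>, \<theta>). \<xi> \<in> A \<and> 0 \<le> \<theta> \<and> ereal \<theta> \<le> T} = A \<times> {\<theta>. 0 \<le> \<theta> \<and> ereal \<theta> \<le> T}"
    for A :: "'a set" and T by auto
  from phi_le_SUP_payoff[OF assms(5,7) x] show "phi \<mu> f (t - \<delta>) \<le> (SUP p \<in> {(\<xi>, \<theta>).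
      \<xi> \<in> convex hull (g ` (convex hull (msupport \<mu>))) \<and> 0 \<le> \<theta> \<and> ereal \<theta> \<le> Lstar \<mu> x / ereal \<delta>}.
    ereal ((snd p *\<^sub>R fst p) \<bullet> x - Lam \<mu> (snd p *\<^sub>R fst p) - snd p * \<delta>))"
    by (simp add: product case_prod_beta)
qed

end
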